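(* Let $G=(V,E)$ be a finite simple undirected graph, $k\ge1$ an integer, $S\subseteq V$ a $k$-plex, and $C\subseteq V$ with $C\cap S=\emptyset$. Let $v\in C$. Initialize $\mathrm{sup}(w)=k-|\overline{N}_w(S)|$ for each $w\in S$ and $D=N(v)\cap C$. Process the vertices $u\in N(v)\cap C$ one at a time in an arbitrary order; when processing $u$: if $\overline{N}_u(S)=\emptyset$, keep $u$ in $D$; otherwise choose $w\in\overline{N}_u(S)$ with $\mathrm{sup}(w)\le \mathrm{sup}(w')$ for all $w'\in\overline{N}_u(S)$ (ties broken arbitrarily), and if $\mathrm{sup}(w)>0$ decrease $\mathrm{sup}(w)$ by $1$ (keeping $u$ in $D$), while if $\mathrm{sup}(w)\le 0$ remove $u$ from $D$. Let $D$ be the resulting set after all vertices have been processed. Then every $k$-plex $S'$ with $S\cup\{v\}\subseteq S'\subseteq S\cup C$ satisfies $$|S'|\le |S|+k-|\overline{N}_v(S)|+|D|.$$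
   Context: $N(x)$ denotes the set of neighbors of $x$ in $G$ ($x\notin N(x)$). For $x\in V$ and $T\subseteq V$, $\overline{N}_x(T)=T\setminus N(x)$ is the set of non-neighbors of $x$ in $T$; if $x\in T$ then $x\in\overline{N}_x(T)$. A set $T\subseteq V$ is a $k$-plex if every vertex $u\in T$ satisfies $|N(u)\cap T|\ge |T|-k$ (equivalently $|\overline{N}_u(T)|\le k$). *)

theory Defs
  imports Main
begin

definition simple_graph :: "'a set \<Rightarrow> ('a \<Rightarrow> 'a \<Rightarrow> bool) \<Rightarrow> bool" where
  "simple_graph V E \<longleftrightarrow> finite V \<and> (\<forall>x y. E x y \<longrightarrow> x \<in> V \<and> y \<in> V)
     \<and> (\<forall>x y. E x y \<longrightarrow> E y x) \<and> (\<forall>x. \<not> E x x)"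

definition nbhd :: "'a set \<Rightarrow> ('a \<Rightarrow> 'a \<Rightarrow> bool) \<Rightarrow> 'a \<Rightarrow> 'a set" where
  "nbhd V E x = {y \<in> V. E x y}"

text \<open>non-neighbours of x in T (contains x itself if x is in T)\<close>
definition non_nbrs :: "'a set \<Rightarrow> ('a \<Rightarrow> 'a \<Rightarrow> bool) \<Rightarrow> 'a \<Rightarrow> 'a set \<Rightarrow> 'a set" where
  "non_nbrs V E x T = T - nbhd V E x"

definition is_kplex :: "'a set \<Rightarrow> ('a \<Rightarrow> 'a \<Rightarrow> bool) \<Rightarrow> nat \<Rightarrow> 'a set \<Rightarrow> bool" where
  "is_kplex V E k T \<longleftrightarrow> T \<subseteq> V \<and> (\<forall>u\<in>T. card (non_nbrs V E u T) \<le> k)"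

text \<open>Ties in the choice
 of w are resolved arbitrarily, which is captured by the existential choice of w.\<close>
inductive sup_process :: "'a set \<Rightarrow> ('a \<Rightarrow> 'a \<Rightarrow> bool) \<Rightarrow> 'a set \<Rightarrow>
    ('a \<Rightarrow> int) \<Rightarrow> 'a set \<Rightarrow> 'a list \<Rightarrow> ('a \<Rightarrow> int) \<Rightarrow> 'a set \<Rightarrow> bool"
  for V E S where
  finish: "sup_process V E S sp D [] sp D"
| keep_empty: "non_nbrs V E u S = {} \<Longrightarrow> sup_process V E S sp D us sp' D'
     \<Longrightarrow> sup_process V E S sp D (u # us) sp' D'"
| decrease: "w \<in> non_nbrs V E u S \<Longrightarrow> (\<forall>w'\<in>non_nbrs V E u S. sp w \<le> sp w') \<Longrightarrow> sp w > 0
     \<Longrightarrow> sup_process V E S (sp(w := sp w - 1)) D us sp' D'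
     \<Longrightarrow> sup_process V E S sp D (u # us) sp' D'"
| remove: "w \<in> non_nbrs V E u S \<Longrightarrow> (\<forall>w'\<in>non_nbrs V E u S. sp w \<le> sp w') \<Longrightarrow> sp w \<le> 0
     \<Longrightarrow> sup_process V E S sp (D - {u}) us sp' D'
     \<Longrightarrow> sup_process V E S sp D (u # us) sp' D'"

end

theory Submission
  imports Defs
begin

text \<open>For a k-plex S' between S \<union> {v} and S \<union> C put R = S' - S and A = R \<inter> N(v). The
  vertices of R - A are non-neighbours of v in S', so there are at most \<open>k - |\<overline>N\<^sub>v(S)|\<close> of
  them. For A we use the invariant that every w \<in> S is a non-neighbour of at most sup(w) vertices
  of A that are still to be processed (the \<open>demand\<close> of A on w); initially this holds because S'
  is a k-plex. Each processed u that stays in D costs A at most one vertex: u itself if u \<in> A,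
  otherwise a vertex of A non-adjacent to the decremented w; a removed u cannot lie in A at all. Hence
  \<open>|A| \<le> |D|\<close>.\<close>

definition demand :: "'a set \<Rightarrow> ('a \<Rightarrow> 'a \<Rightarrow> bool) \<Rightarrow> 'a set \<Rightarrow> 'a set \<Rightarrow> 'a \<Rightarrow> nat" where
  "demand V E S A w = card {x \<in> A. w \<in> non_nbrs V E x S}"

lemma demand_mono:
  assumes "finite A" "A' \<subseteq> A"
  shows "demand V E S A' w \<le> demand V E S A w"
  unfolding demand_def using assms by (intro card_mono) auto

lemma demand_Diff_non_nbr:
  assumes "finite A" "y \<in> A" "w \<in> non_nbrs V E y S"
  shows "Suc (demand V E S (A - {y}) w) = demand V E S A w"
proof -
  define M where "M = {x \<in> A. w \<in> non_nbrs V E x S}"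
  have "{x \<in> A - {y}. w \<in> non_nbrs V E x S} = M - {y}" unfolding M_def by blast
  moreover have "Suc (card (M - {y})) = card M"
    using assms unfolding M_def by (intro card_Suc_Diff1) auto
  ultimately show ?thesis unfolding demand_def M_def by simp
qed

lemma demand_eq_card_non_nbrs:
  assumes "simple_graph V E" "w \<in> S" "w \<in> V" "A \<subseteq> V"
  shows "demand V E S A w = card (non_nbrs V E w A)"
proof -
  have "E x w \<longleftrightarrow> E w x" for x
    using assms(1) unfolding simple_graph_def by metis
  then have "{x \<in> A. w \<in> non_nbrs V E x S} = non_nbrs V E w A"
    using assms(2-4) unfolding non_nbrs_def nbhd_def by auto
  then show ?thesis unfolding demand_def by simp
qed

lemma demand_le_after_removal:
  assumes "finite A" "y \<in> A" "w \<in> non_nbrs V E y S"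
    and "\<forall>w'\<in>S. int (demand V E S A w') \<le> sp w'"
  shows "\<forall>w'\<in>S. int (demand V E S (A - {y}) w') \<le> (sp(w := sp w - 1)) w'"
proof
  fix w' assume "w' \<in> S"
  show "int (demand V E S (A - {y}) w') \<le> (sp(w := sp w - 1)) w'"
  proof (cases "w' = w")
    case True
    then show ?thesis
      using demand_Diff_non_nbr[OF assms(1-3)] assms(4) \<open>w' \<in> S\<close> by force
  next
    case False
    have "demand V E S (A - {y}) w' \<le> demand V E S A w'"
      using assms(1) by (intro demand_mono) auto
    then show ?thesis using False assms(4) \<open>w' \<in> S\<close> by force
  qed
qed

lemma demand_le_after_decrement:
  assumes "finite A" "w \<in> non_nbrs V E u S" "sp w > 0"
    and "\<forall>w'\<in>S. int (demand V E S A w') \<le> sp w'"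
  obtains A' where "A' \<subseteq> A - {u}" "card A \<le> Suc (card A')"
    "\<forall>w'\<in>S. int (demand V E S A' w') \<le> (sp(w := sp w - 1)) w'"
proof (cases "u \<in> A")
  case True
  then show ?thesis
    using that[of "A - {u}"] demand_le_after_removal[OF assms(1) True assms(2,4)]
    by (simp add: card_Suc_Diff1[OF assms(1)])
next
  case u_notin: False
  show ?thesis
  proof (cases "int (demand V E S A w) < sp w")
    case True
    then show ?thesis using that[of A] u_notin assms(4) by auto
  next
    case False
    then have "demand V E S A w \<noteq> 0" using assms(3) by linarith
    then have "{x \<in> A. w \<in> non_nbrs V E x S} \<noteq> {}" unfolding demand_def by force
    then obtain y where y: "y \<in> A" "w \<in> non_nbrs V E y S" by blast
    then show ?thesis
      using that[of "A - {y}"] demand_le_after_removal[OF assms(1) y assms(4)] u_notin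
      by (auto simp: card_Suc_Diff1[OF assms(1)])
  qed
qed

lemma sup_process_result_subset: "sup_process V E S sp D L sp' D' \<Longrightarrow> D' \<subseteq> D"
  by (induction rule: sup_process.induct) auto

lemma sup_process_keeps_unlisted:
  "sup_process V E S sp D L sp' D' \<Longrightarrow> x \<in> D \<Longrightarrow> x \<notin> set L \<Longrightarrow> x \<in> D'"
  by (induction rule: sup_process.induct) auto

lemma card_Int_Cons_kept:
  assumes "u \<in> D'" "u \<notin> set us"
  shows "card (D' \<inter> set (u # us)) = Suc (card (D' \<inter> set us))"
  using assms by (simp add: Int_insert_right)

lemma sup_process_card_le:
  assumes "sup_process V E S sp D L sp' D'" "distinct L" "set L \<subseteq> D" "A \<subseteq> set L"
    and "\<forall>w\<in>S. int (demand V E S A w) \<le> sp w"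
  shows "card A \<le> card (D' \<inter> set L)"
  using assms
proof (induction arbitrary: A rule: sup_process.induct)
  case (finish sp D)
  then show ?case by simp
next
  case (keep_empty u sp D us sp' D')
  have "finite A" using keep_empty.prems(3) finite_subset by blast
  have "\<forall>w\<in>S. int (demand V E S (A - {u}) w) \<le> sp w"
  proof
    fix w assume "w \<in> S"
    have "demand V E S (A - {u}) w \<le> demand V E S A w"
      using \<open>finite A\<close> by (intro demand_mono) auto
    then show "int (demand V E S (A - {u}) w) \<le> sp w" using keep_empty.prems(4) \<open>w \<in> S\<close> by force
  qed
  then have "card (A - {u}) \<le> card (D' \<inter> set us)"
    using keep_empty.prems by (intro keep_empty.IH) auto
  moreover have "card (D' \<inter> set (u # us)) = Suc (card (D' \<inter> set us))"
    using keep_empty.prems sup_process_keeps_unlisted[OF keep_empty.hyps(2)]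
    by (intro card_Int_Cons_kept) auto
  ultimately show ?case
    using card_Diff1_le[of A u] card_Suc_Diff1[OF \<open>finite A\<close>, of u]
    by (cases "u \<in> A") auto
next
  case (decrease w u sp D us sp' D')
  have "finite A" using decrease.prems(3) finite_subset by blast
  obtain A' where A': "A' \<subseteq> A - {u}" "card A \<le> Suc (card A')"
    "\<forall>w'\<in>S. int (demand V E S A' w') \<le> (sp(w := sp w - 1)) w'"
    using demand_le_after_decrement[OF \<open>finite A\<close> decrease.hyps(1,3) decrease.prems(4)] .
  have "card A' \<le> card (D' \<inter> set us)"
    using decrease.prems A' by (intro decrease.IH) auto
  moreover have "card (D' \<inter> set (u # us)) = Suc (card (D' \<inter> set us))"
    using decrease.prems sup_process_keeps_unlisted[OF decrease.hyps(4)]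
    by (intro card_Int_Cons_kept) auto
  ultimately show ?case using A'(2) by linarith
next
  case (remove w u sp D us sp' D')
  have "finite A" using remove.prems(3) finite_subset by blast
  have "w \<in> S" using remove.hyps(1) unfolding non_nbrs_def by simp
  have "u \<notin> A"
  proof
    assume "u \<in> A"
    then have "demand V E S A w > 0"
      using demand_Diff_non_nbr[OF \<open>finite A\<close> _ remove.hyps(1)] by (metis zero_less_Suc)
    then show False using remove.prems(4) \<open>w \<in> S\<close> remove.hyps(3) by force
  qed
  then have "card A \<le> card (D' \<inter> set us)"
    using remove.prems by (intro remove.IH) auto
  also have "\<dots> \<le> card (D' \<inter> set (u # us))" by (intro card_mono) auto
  finally show ?case .
qed

lemma card_non_nbrs_Un_disjoint:
  assumes "finite T" "finite U" "T \<inter> U = {}"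
  shows "card (non_nbrs V E x (T \<union> U)) = card (non_nbrs V E x T) + card (non_nbrs V E x U)"
proof -
  have "non_nbrs V E x (T \<union> U) = non_nbrs V E x T \<union> non_nbrs V E x U"
    unfolding non_nbrs_def by blast
  moreover have "non_nbrs V E x T \<inter> non_nbrs V E x U = {}"
    using assms(3) unfolding non_nbrs_def by blast
  ultimately show ?thesis
    using assms(1,2) unfolding non_nbrs_def by (simp add: card_Un_disjoint)
qed

lemma card_non_nbrs_split_le:
  assumes "is_kplex V E k (T \<union> U)" "finite T" "finite U" "T \<inter> U = {}" "x \<in> T \<union> U"
  shows "card (non_nbrs V E x T) + card (non_nbrs V E x U) \<le> k"
  using assms card_non_nbrs_Un_disjoint[OF assms(2-4)] unfolding is_kplex_def by simp

lemma kplex_extension_finite: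
  assumes "simple_graph V E" "is_kplex V E k (S \<union> R)"
  shows "finite S" "finite R" "S \<subseteq> V" "R \<subseteq> V"
  using assms finite_subset unfolding simple_graph_def is_kplex_def by auto

lemma kplex_extension_demand_le:
  assumes "simple_graph V E" "is_kplex V E k (S \<union> R)" "S \<inter> R = {}" "A \<subseteq> R" "w \<in> S"
  shows "demand V E S A w + card (non_nbrs V E w S) \<le> k"
proof -
  note fin = kplex_extension_finite[OF assms(1,2)]
  have "demand V E S A w = card (non_nbrs V E w A)"
    using fin assms(4,5) by (intro demand_eq_card_non_nbrs[OF assms(1)]) auto
  moreover have "card (non_nbrs V E w A) \<le> card (non_nbrs V E w R)"
    using fin assms(4) unfolding non_nbrs_def by (intro card_mono) auto
  moreover have "card (non_nbrs V E w S) + card (non_nbrs V E w R) \<le> k"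
    using assms(5) by (intro card_non_nbrs_split_le[OF assms(2) fin(1,2) assms(3)]) simp
  ultimately show ?thesis by linarith
qed

lemma kplex_extension_card_le:
  assumes "simple_graph V E" "is_kplex V E k (S \<union> R)" "S \<inter> R = {}" "v \<in> S \<union> R"
  shows "card (S \<union> R) + card (non_nbrs V E v S) \<le> card S + card (R \<inter> nbhd V E v) + k"
proof -
  note fin = kplex_extension_finite[OF assms(1,2)]
  have "R = (R \<inter> nbhd V E v) \<union> non_nbrs V E v R" "(R \<inter> nbhd V E v) \<inter> non_nbrs V E v R = {}"
    unfolding non_nbrs_def by auto
  then have "card R = card (R \<inter> nbhd V E v) + card (non_nbrs V E v R)"
    using fin(2) by (metis card_Un_disjoint finite_Un)
  then show ?thesis
    using card_non_nbrs_split_le[OF assms(2) fin(1,2) assms(3,4)]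
      card_Un_disjoint[OF fin(1,2) assms(3)] by linarith
qed

theorem lemma6:
  fixes V :: "'a set" and E :: "'a \<Rightarrow> 'a \<Rightarrow> bool" and k :: nat
    and S C D :: "'a set" and v :: 'a and us :: "'a list" and sp' :: "'a \<Rightarrow> int"
  assumes "simple_graph V E"
    and "k \<ge> 1"
    and "is_kplex V E k S"
    and "C \<subseteq> V" and "C \<inter> S = {}"
    and "v \<in> C"
    and "distinct us" and "set us = nbhd V E v \<inter> C"
    and "sup_process V E S (\<lambda>w. int k - int (card (non_nbrs V E w S)))
           (nbhd V E v \<inter> C) us sp' D"
  shows "\<forall>S'. is_kplex V E k S' \<and> insert v S \<subseteq> S' \<and> S' \<subseteq> S \<union> C \<longrightarrow>
     int (card S') \<le> int (card S) + int k - int (card (non_nbrs V E v S)) + int (card D)"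
proof (intro allI impI)
  fix S' assume S': "is_kplex V E k S' \<and> insert v S \<subseteq> S' \<and> S' \<subseteq> S \<union> C"
  define R where "R = S' - S"
  have S'_split: "S' = S \<union> R" "S \<inter> R = {}" using S' unfolding R_def by auto
  have kplex: "is_kplex V E k (S \<union> R)" using S' S'_split(1) by simp
  have "card (R \<inter> nbhd V E v) \<le> card (D \<inter> set us)"
  proof (rule sup_process_card_le[OF assms(9,7)])
    show "set us \<subseteq> nbhd V E v \<inter> C" "R \<inter> nbhd V E v \<subseteq> set us"
      using assms(8) S' unfolding R_def by auto
    show "\<forall>w\<in>S. int (demand V E S (R \<inter> nbhd V E v) w) \<le> int k - int (card (non_nbrs V E w S))"
    proof
      fix w assume "w \<in> S"
      have "demand V E S (R \<inter> nbhd V E v) w + card (non_nbrs V E w S) \<le> k"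
        using \<open>w \<in> S\<close> by (intro kplex_extension_demand_le[OF assms(1) kplex S'_split(2)]) auto
      then show "int (demand V E S (R \<inter> nbhd V E v) w) \<le> int k - int (card (non_nbrs V E w S))"
        by linarith
    qed
  qed
  also have "\<dots> \<le> card D"
  proof (rule card_mono)
    show "finite D"
      using sup_process_result_subset[OF assms(9)] assms(1)
      unfolding simple_graph_def nbhd_def by (auto intro: finite_subset)
  qed simp
  finally have "card (R \<inter> nbhd V E v) \<le> card D" .
  moreover have "card S' + card (non_nbrs V E v S) \<le> card S + card (R \<inter> nbhd V E v) + k"
    unfolding S'_split(1) using S' S'_split by (intro kplex_extension_card_le[OF assms(1) kplex]) auto
  ultimately show "int (card S') \<le> int (card S) + int k - int (card (non_nbrs V E v S)) + int (card D)"
    by linarith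
qed

end
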